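(* Let $n\in\mathbb{N}$, let $\mathbf{s}=(s_0,\ldots,s_n)\subset[0,\infty)$ be strictly positive on $(0,\infty)$ and let $s_{-1}\in[0,\infty)$. Then the following are equivalent: (i) $\mathbf{s}'=(s_{-1},s_0,\ldots,s_n)$ (with $s_{-1}$ as zeroth term) is positive but not strictly positive on $(0,\infty)$; (ii) $n$ is odd and $s_{-1}=t_\infty(\mathbf{s})$. Moreover, if (i) holds and $n=2m-1$, then $\mathcal{M}_\infty(\mathbf{s}')$ has a unique element and its atoms are the roots of $Q(t)=\det\begin{bmatrix}s_0&s_1&\cdots&s_{m-1}&1\\ s_1&s_2&\cdots&s_m&t\\ \vdots&&&&\vdots\\ s_m&s_{m+1}&\cdots&s_{2m-1}&t^m\end{bmatrix}$.
   Context: For $a<b$ and $\mathbf{u}=(u_0,\ldots,u_k)$, $\mathbf{u}$ is positive on $[a,b]$ if $\sigma(x^j)=u_j$ defines a functional nonnegative on real polynomials of degree $\le k$ that are nonnegative on $[a,b]$, strictly positive if moreover $\sigma(P)>0$ for such $P\not\equiv0$; (strictly) positive on $(0,\infty)$ means (strictly) positive on some $[a,b]\subset(0,\infty)$. $\mathcal{M}_{a,b}(\mathbf{u})$: positive Borel measures on $[a,b]$ with $j$-th moments $u_j$; $\mathcal{M}_\infty(\mathbf{u})$: positive Borel measures on $(0,\infty)$ supported in a compact subinterval of $(0,\infty)$ with $j$-th moments $u_j$. $t_{a,b}(\mathbf{u})=\inf\{\int\frac1t\,d\mu:\mu\in\mathcal{M}_{a,b}(\mathbf{u})\}$ ($\inf\varnothing=\infty$),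 $t_\infty(\mathbf{u})=\inf_{0<a<b}t_{a,b}(\mathbf{u})$. *)

theory Defs
  imports "HOL-Probability.Probability" "Jordan_Normal_Form.Determinant"
begin

text \<open>A finite sequence u = (u_0,...,u_k) is represented by a list of length k+1.
  The functional sigma on polynomials of degree at most k: sigma(x^j) = u_j.\<close>

definition seq_functional :: "real list \<Rightarrow> real poly \<Rightarrow> real" where
  "seq_functional u P = (\<Sum>j<length u. coeff P j * u ! j)"

definition positive_on :: "real \<Rightarrow> real \<Rightarrow> real list \<Rightarrow> bool" where
  "positive_on a b u \<longleftrightarrow>
     (\<forall>P::real poly. degree P < length u \<and> (\<forall>x\<in>{a..b}. poly P x \<ge> 0)
        \<longrightarrow> seq_functional u P \<ge> 0)"

definition strictly_positive_on :: "real \<Rightarrow> real \<Rightarrow> real list \<Rightarrow> bool" where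
  "strictly_positive_on a b u \<longleftrightarrow> positive_on a b u \<and>
     (\<forall>P::real poly. degree P < length u \<and> (\<forall>x\<in>{a..b}. poly P x \<ge> 0) \<and> P \<noteq> 0
        \<longrightarrow> seq_functional u P > 0)"

definition positive_on_pos_reals :: "real list \<Rightarrow> bool" where
  "positive_on_pos_reals u \<longleftrightarrow> (\<exists>a b. 0 < a \<and> a < b \<and> positive_on a b u)"

definition strictly_positive_on_pos_reals :: "real list \<Rightarrow> bool" where
  "strictly_positive_on_pos_reals u \<longleftrightarrow> (\<exists>a b. 0 < a \<and> a < b \<and> strictly_positive_on a b u)"

definition moment_measures :: "real \<Rightarrow> real \<Rightarrow> real list \<Rightarrow> real measure set" where
  "moment_measures a b u = {M. sets M = sets borel \<and> finite_measure M \<and>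
      emeasure M (UNIV - {a..b}) = 0 \<and>
      (\<forall>j<length u. integrable M (\<lambda>x. x ^ j) \<and> (\<integral>x. x ^ j \<partial>M) = u ! j)}"

definition moment_measures_pos_reals :: "real list \<Rightarrow> real measure set" where
  "moment_measures_pos_reals u = (\<Union>a\<in>{0<..}. \<Union>b\<in>{a<..}. moment_measures a b u)"

definition t_ab :: "real \<Rightarrow> real \<Rightarrow> real list \<Rightarrow> ereal" where
  "t_ab a b u = Inf ((\<lambda>M. ereal (\<integral>t. 1 / t \<partial>M)) ` moment_measures a b u)"

definition t_infty :: "real list \<Rightarrow> ereal" where
  "t_infty u = (INF a\<in>{0<..}. INF b\<in>{a<..}. t_ab a b u)"

definition Q_det :: "real list \<Rightarrow> nat \<Rightarrow> real \<Rightarrow> real" where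
  "Q_det s m t = Determinant.det (Matrix.mat (m+1) (m+1)
      (\<lambda>(i,j). if j < m then s ! (i + j) else t ^ i))"

definition atoms :: "real measure \<Rightarrow> real set" where
  "atoms M = {x. emeasure M {x} > 0}"

end

(* Let m be such that n = 2m - 1.  A strictly positive s has a Gauss quadrature: m nodes in
   (0, oo), namely the roots of the orthogonal polynomial Q, with positive weights w.  Dividing the
   weights by the nodes represents s' = (c, s) by the same nodes plus the mass c - sum w(x)/x at 0.
   When s' is positive, testing with Q^2 shows that this mass is nonnegative.  A positive mass at 0
   can be spread by Lagrange extrapolation over nodes interlacing the Gauss nodes, which makes s'
   strictly positive; a zero mass leaves a quadrature with m nodes for 2m + 1 moments, so Q^2
   witnesses that s' is not strictly positive and forces every representing measure onto the roots
   of Q.  Testing with Q^2 / t also shows that sum w(x)/x is the least possible integral of 1/t,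
   i.e. t_oo(s).  For even n = 2m the Radau quadrature of s with an extra node at the right end has
   m + 1 nodes for 2m + 2 moments of s', and the same dichotomy always yields strict positivity. *)

theory Submission
  imports Defs
begin

lemma seq_functional_add: "seq_functional u (P + R) = seq_functional u P + seq_functional u R"
  by (simp add: seq_functional_def algebra_simps sum.distrib)

lemma seq_functional_smult: "seq_functional u (Polynomial.smult c P) = c * seq_functional u P"
  by (simp add: seq_functional_def sum_distrib_left algebra_simps)

lemma seq_functional_0 [simp]: "seq_functional u 0 = 0"
  by (simp add: seq_functional_def)

lemma seq_functional_uminus: "seq_functional u (- P) = - seq_functional u P"
  by (simp add: seq_functional_def sum_negf)

lemma seq_functional_diff: "seq_functional u (P - R) = seq_functional u P - seq_functional u R"
  by (simp add: seq_functional_def algebra_simps sum_subtractf)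

lemma seq_functional_sum: "seq_functional u (\<Sum>i\<in>A. f i) = (\<Sum>i\<in>A. seq_functional u (f i))"
  by (induction A rule: infinite_finite_induct) (auto simp: seq_functional_add)

lemma seq_functional_monom: "j < length u \<Longrightarrow> seq_functional u (monom c j) = c * u ! j"
  by (simp add: seq_functional_def coeff_monom if_distrib[of "\<lambda>x. x * _"] cong: if_cong)

lemma seq_functional_pCons: "seq_functional (c # u) (pCons a P) = c * a + seq_functional u P"
  unfolding seq_functional_def length_Cons sum.lessThan_Suc_shift by (simp add: mult.commute)

lemma seq_functional_const: "u \<noteq> [] \<Longrightarrow> seq_functional u [:c:] = c * u ! 0"
  by (cases u) (simp_all add: seq_functional_pCons)

definition is_quadrature :: "real list \<Rightarrow> real set \<Rightarrow> (real \<Rightarrow> real) \<Rightarrow> bool" where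
  "is_quadrature u X w \<longleftrightarrow> finite X \<and>
     (\<forall>P. degree P < length u \<longrightarrow> seq_functional u P = (\<Sum>x\<in>X. w x * poly P x))"

lemma is_quadratureD:
  "is_quadrature u X w \<Longrightarrow> degree P < length u \<Longrightarrow> seq_functional u P = (\<Sum>x\<in>X. w x * poly P x)"
  by (simp add: is_quadrature_def)

lemma is_quadrature_finite: "is_quadrature u X w \<Longrightarrow> finite X"
  by (simp add: is_quadrature_def)

lemma is_quadrature_remove_zero_weight:
  assumes "is_quadrature u (insert z X) w" "w z = 0"
  shows "is_quadrature u X w"
proof -
  have "finite X" using assms(1) by (simp add: is_quadrature_def)
  then show ?thesis
    using assms by (auto simp: is_quadrature_def sum.insert_if split: if_splits)
qed

lemma is_quadrature_cong:
  "is_quadrature u X w \<Longrightarrow> (\<And>x. x \<in> X \<Longrightarrow> w x = w' x) \<Longrightarrow> is_quadrature u X w'"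
  by (simp add: is_quadrature_def)

definition node_poly :: "real set \<Rightarrow> real poly" where
  "node_poly X = (\<Prod>x\<in>X. [:- x, 1:])"

lemma poly_node_poly_eq_0_iff: "finite X \<Longrightarrow> poly (node_poly X) t = 0 \<longleftrightarrow> t \<in> X"
  by (simp add: node_poly_def poly_prod prod_zero_iff)

lemma node_poly_nonzero: "finite X \<Longrightarrow> node_poly X \<noteq> 0"
  by (simp add: node_poly_def prod_zero_iff)

lemma degree_node_poly: "finite X \<Longrightarrow> degree (node_poly X) = card X"
  by (simp add: node_poly_def degree_prod_eq_sum_degree)

lemma degree_node_poly_square: "finite X \<Longrightarrow> degree (node_poly X * node_poly X) = 2 * card X"
  by (simp add: degree_mult_eq node_poly_nonzero degree_node_poly)

lemma poly_node_poly_square_pos: "finite X \<Longrightarrow> t \<notin> X \<Longrightarrow> poly (node_poly X * node_poly X) t > 0"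
  using poly_node_poly_eq_0_iff[of X t] by (metis poly_mult not_real_square_gt_zero)

lemma order_node_poly: "finite X \<Longrightarrow> order t (node_poly X) = (if t \<in> X then 1 else 0)"
proof (induction X rule: finite_induct)
  case (insert x X)
  have "node_poly (insert x X) = [:- x, 1:] * node_poly X"
    using insert.hyps by (simp add: node_poly_def)
  then have "order t (node_poly (insert x X)) = order t [:- x, 1:] + order t (node_poly X)"
    using node_poly_nonzero[OF insert.hyps(1)] by (metis order_mult pCons_eq_0_iff mult_eq_0_iff
        one_neq_zero)
  moreover have "order t [:- x, 1:] = (if t = x then 1 else 0)"
    using order_power_n_n[of x 1] by (auto intro: order_0I)
  ultimately show ?case using insert by auto
qed (simp add: node_poly_def order_0I)

definition lagrange_basis :: "real set \<Rightarrow> real \<Rightarrow> real poly" where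
  "lagrange_basis S x = Polynomial.smult (1 / poly (node_poly (S - {x})) x) (node_poly (S - {x}))"

lemma poly_lagrange_basis:
  assumes "finite S" "x \<in> S" "z \<in> S"
  shows "poly (lagrange_basis S x) z = (if z = x then 1 else 0)"
  using assms poly_node_poly_eq_0_iff[of "S - {x}"] by (auto simp: lagrange_basis_def)

lemma degree_lagrange_basis: "finite S \<Longrightarrow> x \<in> S \<Longrightarrow> degree (lagrange_basis S x) = card S - 1"
  using poly_node_poly_eq_0_iff[of "S - {x}" x]
  by (simp add: lagrange_basis_def degree_node_poly)

lemma poly_lagrange_basis_0:
  assumes "finite S"
  shows "poly (lagrange_basis S x) 0 = (\<Prod>y\<in>S - {x}. y / (y - x))"
proof -
  have "poly (lagrange_basis S x) 0 = (\<Prod>y\<in>S - {x}. - y) / (\<Prod>y\<in>S - {x}. x - y)"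
    by (simp add: lagrange_basis_def node_poly_def poly_prod)
  also have "\<dots> = (\<Prod>y\<in>S - {x}. - y / (x - y))"
    by (rule prod_dividef[symmetric])
  also have "\<dots> = (\<Prod>y\<in>S - {x}. y / (y - x))"
    by (rule prod.cong) (simp_all, metis minus_diff_eq divide_minus_right)
  finally show ?thesis .
qed

lemma lagrange_interpolation:
  assumes "finite S" "degree P < card S"
  shows "P = (\<Sum>x\<in>S. Polynomial.smult (poly P x) (lagrange_basis S x))"
proof (rule poly_eqI_degree)
  show "poly P z = poly (\<Sum>x\<in>S. Polynomial.smult (poly P x) (lagrange_basis S x)) z" if "z \<in> S" for z
    using assms that by (simp add: poly_sum poly_lagrange_basis if_distrib cong: if_cong)
  have "degree (\<Sum>x\<in>S. Polynomial.smult (poly P x) (lagrange_basis S x)) \<le> card S - 1"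
    using assms by (intro degree_sum_le order.trans[OF degree_smult_le])
      (auto simp: degree_lagrange_basis)
  then show "degree (\<Sum>x\<in>S. Polynomial.smult (poly P x) (lagrange_basis S x)) < card S"
    using assms by linarith
qed (use assms in auto)

lemma seq_functional_lagrange_interpolation:
  assumes "finite S" "degree P < card S"
  shows "seq_functional u P = (\<Sum>x\<in>S. poly P x * seq_functional u (lagrange_basis S x))"
  by (subst lagrange_interpolation[OF assms]) (simp add: seq_functional_sum seq_functional_smult)

lemma quadrature_weight_eq:
  assumes "is_quadrature u X w" "x \<in> X" "card X \<le> length u"
  shows "w x = seq_functional u (lagrange_basis X x)"
proof -
  have fin: "finite X" using assms(1) by (rule is_quadrature_finite)
  have "card X > 0" using fin assms(2) card_gt_0_iff by blast
  then have "degree (lagrange_basis X x) < length u"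
    using assms(2,3) fin by (simp add: degree_lagrange_basis)
  then show ?thesis
    using assms fin by (simp add: is_quadratureD poly_lagrange_basis if_distrib cong: if_cong)
qed

text \<open>Testing against the square of a Lagrange basis polynomial isolates a single weight.\<close>

lemma quadrature_weight_pos:
  assumes "is_quadrature u X w" "strictly_positive_on a b u" "x \<in> X"
    and "2 * card X \<le> length u + 1"
  shows "w x > 0"
proof -
  define l where "l = lagrange_basis X x"
  have fin: "finite X" using assms(1) by (rule is_quadrature_finite)
  have "poly l x = 1" using poly_lagrange_basis[OF fin assms(3,3)] by (simp add: l_def)
  then have "l * l \<noteq> 0" by auto
  moreover have "degree (l * l) < length u"
  proof -
    have "card X > 0" using fin assms(3) card_gt_0_iff by blast
    then show ?thesis
      using degree_mult_le[of l l] degree_lagrange_basis[OF fin assms(3)] assms(4)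
      by (simp add: l_def)
  qed
  ultimately have "seq_functional u (l * l) > 0"
    using assms(2) unfolding strictly_positive_on_def by simp
  moreover have "seq_functional u (l * l) = w x"
    using \<open>degree (l * l) < length u\<close> assms fin
    by (simp add: is_quadratureD l_def poly_lagrange_basis if_distrib cong: if_cong)
  ultimately show ?thesis by simp
qed

lemma quadrature_weight_nonneg:
  assumes "is_quadrature u X w" "positive_on a b u" "x \<in> X"
    and "degree P < length u" "\<forall>t\<in>{a..b}. poly P t \<ge> 0"
    and "\<forall>y\<in>X - {x}. poly P y = 0" "poly P x > 0"
  shows "w x \<ge> 0"
proof -
  have "seq_functional u P = w x * poly P x"
    using assms is_quadrature_finite[OF assms(1)]
    by (simp add: is_quadratureD sum.remove[of X x])
  moreover have "seq_functional u P \<ge> 0" using assms(2,4,5) by (simp add: positive_on_def)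
  ultimately show ?thesis using assms(7) by (simp add: zero_le_mult_iff)
qed

lemma quadrature_imp_positive_on:
  assumes "is_quadrature u X w" "\<forall>x\<in>X. w x \<ge> 0" "X \<subseteq> {a..b}"
  shows "positive_on a b u"
  unfolding positive_on_def
  using assms by (auto simp: is_quadratureD intro!: sum_nonneg)

lemma positive_on_mono: "positive_on a b u \<Longrightarrow> a' \<le> a \<Longrightarrow> b \<le> b' \<Longrightarrow> positive_on a' b' u"
  unfolding positive_on_def by auto

lemma order_ge_2_at_interior_root:
  fixes P :: "real poly"
  assumes "P \<noteq> 0" "poly P z = 0" "z \<in> {a<..<b}" "\<forall>x\<in>{a<..<b}. poly P x \<ge> 0"
  shows "order z P \<ge> 2"
proof -
  have "poly (pderiv P) z = 0"
  proof (rule DERIV_local_min[OF poly_DERIV])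
    show "0 < min (z - a) (b - z)" using assms by simp
    show "\<forall>y. \<bar>z - y\<bar> < min (z - a) (b - z) \<longrightarrow> poly P z \<le> poly P y"
      using assms by (auto simp: abs_if split: if_splits)
  qed
  moreover have "pderiv P \<noteq> 0"
  proof
    assume "pderiv P = 0"
    then obtain c where "P = [:c:]" by (metis pderiv_eq_0_iff degree_eq_zeroE)
    then show False using assms(1,2) by auto
  qed
  ultimately show ?thesis
    using order_pderiv[OF assms(1,2)] order_gt_0_iff[of "pderiv P" z] by simp
qed

lemma double_roots_card_le_degree:
  fixes P :: "real poly"
  assumes "finite Z" "P \<noteq> 0" "\<forall>z\<in>Z. order z P \<ge> 2"
  shows "2 * card Z \<le> degree P"
  using assms
proof (induction Z arbitrary: P rule: finite_induct)
  case (insert z Z)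
  have "[:- z, 1:] ^ 2 dvd P"
    using insert.prems order_1[of z P] power_le_dvd by blast
  then obtain P' where P': "P = [:- z, 1:] ^ 2 * P'" by (elim dvdE)
  with insert.prems have "P' \<noteq> 0" by auto
  have "order y P = order y ([:- z, 1:] ^ 2) + order y P'" for y
    using P' insert.prems by (simp add: order_mult)
  moreover have "order y ([:- z, 1:] ^ 2) = 0" if "y \<noteq> z" for y
    using that by (intro order_0I) simp
  ultimately have "\<forall>y\<in>Z. order y P' \<ge> 2"
    using insert.hyps(2) insert.prems(2) by (metis add_0 insertCI)
  then have "2 * card Z \<le> degree P'" using insert.IH \<open>P' \<noteq> 0\<close> by blast
  moreover have "degree P = 2 + degree P'"
    using P' \<open>P' \<noteq> 0\<close> by (simp add: degree_mult_eq degree_linear_power)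
  ultimately show ?case using insert by simp
qed simp

lemma quadrature_imp_strictly_positive_on:
  assumes "is_quadrature u X w" "\<forall>x\<in>X. w x > 0" "X \<subseteq> {a<..<b}" "length u \<le> 2 * card X"
  shows "strictly_positive_on a b u"
  unfolding strictly_positive_on_def
proof (intro conjI allI impI)
  show "positive_on a b u"
    using assms(1-3) by (intro quadrature_imp_positive_on[of u X w]) (auto simp: less_imp_le)
  fix P :: "real poly"
  assume P: "degree P < length u \<and> (\<forall>x\<in>{a..b}. poly P x \<ge> 0) \<and> P \<noteq> 0"
  have fin: "finite X" using assms(1) by (rule is_quadrature_finite)
  have nonneg: "\<forall>x\<in>X. w x * poly P x \<ge> 0" using assms(2,3) P by force
  show "seq_functional u P > 0"
  proof (rule ccontr)
    assume "\<not> seq_functional u P > 0"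
    then have "(\<Sum>x\<in>X. w x * poly P x) = 0"
      using P assms(1) nonneg by (simp add: is_quadratureD antisym sum_nonneg)
    then have "\<forall>x\<in>X. w x * poly P x = 0"
      using sum_nonneg_eq_0_iff[OF fin, of "\<lambda>x. w x * poly P x"] nonneg by simp
    then have "\<forall>x\<in>X. poly P x = 0"
      by (metis assms(2) mult_eq_0_iff order_less_irrefl)
    then have "\<forall>z\<in>X. order z P \<ge> 2"
      using assms(3) P by (intro ballI order_ge_2_at_interior_root) auto
    then have "2 * card X \<le> degree P" using double_roots_card_le_degree fin P by blast
    then show False using P assms(4) by linarith
  qed
qed

lemma not_strictly_positive_on_if_few_nodes:
  assumes "is_quadrature u X w" "2 * card X < length u"
  shows "\<not> strictly_positive_on a b u"
proof
  have fin: "finite X" using assms(1) by (rule is_quadrature_finite)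
  define P where "P = node_poly X * node_poly X"
  assume "strictly_positive_on a b u"
  moreover have "P \<noteq> 0" using node_poly_nonzero[OF fin] by (simp add: P_def)
  moreover have "degree P < length u" using assms(2) fin by (simp add: P_def degree_node_poly_square)
  moreover have "\<forall>x\<in>{a..b}. poly P x \<ge> 0" by (simp add: P_def)
  ultimately have "seq_functional u P > 0" unfolding strictly_positive_on_def by simp
  moreover have "\<forall>x\<in>X. poly P x = 0" using poly_node_poly_eq_0_iff[OF fin] by (simp add: P_def)
  then have "seq_functional u P = 0" using is_quadratureD[OF assms(1) \<open>degree P < length u\<close>] by simp
  ultimately show False by simp
qed

lemma quadrature_imp_positive_on_pos_reals:
  assumes "is_quadrature u X w" "\<forall>x\<in>X. w x \<ge> 0" "X \<subseteq> {0<..}"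
  shows "positive_on_pos_reals u"
proof -
  have fin: "finite (insert 1 X)" using assms(1) by (simp add: is_quadrature_finite)
  have "positive_on (Min (insert 1 X)) (Max (insert 1 X) + 1) u"
    using assms(1,2) Min_le[OF fin] Max_ge[OF fin] by (intro quadrature_imp_positive_on) force+
  moreover have "0 < Min (insert 1 X)" using assms(3) fin by (subst Min_gr_iff) auto
  moreover have "Min (insert 1 X) < Max (insert 1 X) + 1"
    using Min_le[OF fin, of 1] Max_ge[OF fin, of 1] by simp
  ultimately show ?thesis unfolding positive_on_pos_reals_def by blast
qed

lemma quadrature_imp_strictly_positive_on_pos_reals:
  assumes "is_quadrature u X w" "\<forall>x\<in>X. w x > 0" "X \<subseteq> {0<..}" "length u \<le> 2 * card X"
  shows "strictly_positive_on_pos_reals u"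
proof -
  have fin: "finite (insert 1 X)" using assms(1) by (simp add: is_quadrature_finite)
  have pos: "0 < Min (insert 1 X)" using assms(3) fin by (subst Min_gr_iff) auto
  have "X \<subseteq> {Min (insert 1 X) / 2<..<Max (insert 1 X) + 1}"
    using Min_le[OF fin] Max_ge[OF fin] pos by force
  then have "strictly_positive_on (Min (insert 1 X) / 2) (Max (insert 1 X) + 1) u"
    using assms by (intro quadrature_imp_strictly_positive_on)
  moreover have "Min (insert 1 X) / 2 < Max (insert 1 X) + 1"
    using Min_le[OF fin, of 1] Max_ge[OF fin, of 1] pos by simp
  moreover have "0 < Min (insert 1 X) / 2" using pos by simp
  ultimately show ?thesis unfolding strictly_positive_on_pos_reals_def by blast
qed

lemma poly_constant_sign_if_no_interior_roots:
  fixes h :: "real poly"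
  assumes "\<forall>z\<in>{a<..<b}. poly h z \<noteq> 0"
  shows "(\<forall>x\<in>{a..b}. poly h x \<ge> 0) \<or> (\<forall>x\<in>{a..b}. poly h x \<le> 0)"
proof (rule ccontr)
  assume "\<not> ?thesis"
  then obtain x y where xy: "x \<in> {a..b}" "y \<in> {a..b}" "poly h x < 0" "poly h y > 0"
    by (auto simp: not_le)
  have "\<exists>r. min x y < r \<and> r < max x y \<and> poly h r = 0"
  proof (cases x y rule: linorder_cases)
    case less then show ?thesis using poly_IVT_pos[OF less xy(3,4)] by auto
  next
    case greater then show ?thesis using poly_IVT_neg[OF greater xy(4,3)] by auto
  qed (use xy in auto)
  then obtain r where r: "min x y < r" "r < max x y" "poly h r = 0" by blast
  then have "r \<in> {a<..<b}" using xy(1,2) by (auto simp: min_less_iff_disj less_max_iff_disj)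
  then show False using assms r(3) by blast
qed

lemma even_root_orders_imp_constant_sign:
  fixes h :: "real poly"
  assumes "h \<noteq> 0" "\<forall>z\<in>{a<..<b}. even (order z h)"
  shows "(\<forall>x\<in>{a..b}. poly h x \<ge> 0) \<or> (\<forall>x\<in>{a..b}. poly h x \<le> 0)"
  using assms
proof (induction "degree h" arbitrary: h rule: less_induct)
  case less
  show ?case
  proof (cases "\<exists>z\<in>{a<..<b}. poly h z = 0")
    case True
    then obtain z where z: "z \<in> {a<..<b}" "poly h z = 0" by blast
    then have "order z h \<noteq> 0" "even (order z h)" using less.prems order_root by blast+
    then have "order z h \<ge> 2" by presburger
    then have "[:- z, 1:] ^ 2 dvd h" using order_1[of z h] power_le_dvd by blast
    then obtain h' where h': "h = [:- z, 1:] ^ 2 * h'" by (elim dvdE)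
    with less.prems have "h' \<noteq> 0" by auto
    have "order y h = order y ([:- z, 1:] ^ 2) + order y h'" for y
      using h' less.prems by (simp add: order_mult)
    moreover have "order y ([:- z, 1:] ^ 2) = (if y = z then 2 else 0)" for y
      using order_power_n_n[of z 2] by (auto intro: order_0I)
    ultimately have "\<forall>y\<in>{a<..<b}. even (order y h')"
      using less.prems(2) by (metis add_0 even_add even_numeral)
    moreover have "degree h' < degree h"
      using h' \<open>h' \<noteq> 0\<close> by (simp add: degree_mult_eq degree_linear_power)
    ultimately have "(\<forall>x\<in>{a..b}. poly h' x \<ge> 0) \<or> (\<forall>x\<in>{a..b}. poly h' x \<le> 0)"
      using less.hyps \<open>h' \<noteq> 0\<close> by blast
    then show ?thesis
      unfolding h' by (auto simp: mult_nonneg_nonneg mult_nonneg_nonpos)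
  next
    case False
    then show ?thesis by (intro poly_constant_sign_if_no_interior_roots) blast
  qed
qed

definition bordered_hankel :: "real list \<Rightarrow> nat \<Rightarrow> (nat \<Rightarrow> real) \<Rightarrow> real mat" where
  "bordered_hankel s m c = mat (m + 1) (m + 1) (\<lambda>(i, j). if j < m then s ! (i + j) else c i)"

text \<open>\<open>Q_det s m\<close> is the determinant of \<open>bordered_hankel s m (\<lambda>i. t ^ i)\<close>; expanding along the
  last column, its coefficients are cofactors that do not depend on that column.\<close>

definition Q_poly :: "real list \<Rightarrow> nat \<Rightarrow> real poly" where
  "Q_poly s m = (\<Sum>i\<le>m. monom (cofactor (bordered_hankel s m (\<lambda>_. 0)) i m) i)"

lemma coeff_Q_poly: "i \<le> m \<Longrightarrow> coeff (Q_poly s m) i = cofactor (bordered_hankel s m c) i m"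
proof -
  assume "i \<le> m"
  have "mat_delete (bordered_hankel s m c) i m = mat_delete (bordered_hankel s m (\<lambda>_. 0)) i m"
    by (rule eq_matI) (auto simp: mat_delete_def bordered_hankel_def)
  then show ?thesis
    using \<open>i \<le> m\<close> by (simp add: Q_poly_def coeff_sum coeff_monom cofactor_def)
qed

lemma degree_Q_poly: "degree (Q_poly s m) \<le> m"
  unfolding Q_poly_def by (intro degree_sum_le) (auto intro: order.trans[OF degree_monom_le])

lemma det_bordered_hankel: "det (bordered_hankel s m c) = (\<Sum>i\<le>m. c i * coeff (Q_poly s m) i)"
proof -
  define B where "B = bordered_hankel s m c"
  have "B \<in> carrier_mat (m + 1) (m + 1)"
    by (simp add: B_def bordered_hankel_def)
  then have "det B = (\<Sum>i<m + 1. B $$ (i, m) * cofactor B i m)"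
    by (rule laplace_expansion_column) simp
  also have "\<dots> = (\<Sum>i\<le>m. c i * coeff (Q_poly s m) i)"
    unfolding lessThan_Suc_atMost[symmetric, simplified]
    by (rule sum.cong)
      (simp_all add: coeff_Q_poly[of _ m s c, folded B_def, symmetric],
        simp add: B_def bordered_hankel_def)
  finally show ?thesis by (simp add: B_def)
qed

lemma poly_Q_poly: "poly (Q_poly s m) t = (\<Sum>i\<le>m. coeff (Q_poly s m) i * t ^ i)"
proof -
  have "poly (Q_poly s m) t = poly (\<Sum>i\<le>m. monom (coeff (Q_poly s m) i) i) t"
    by (simp only: poly_as_sum_of_monoms'[OF degree_Q_poly])
  then show ?thesis by (simp add: poly_sum poly_monom)
qed

lemma Q_det_eq_poly_Q_poly: "Q_det s m t = poly (Q_poly s m) t"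
proof -
  have "Q_det s m t = det (bordered_hankel s m (\<lambda>i. t ^ i))"
    by (simp add: Q_det_def bordered_hankel_def)
  then show ?thesis
    by (simp add: det_bordered_hankel poly_Q_poly mult.commute)
qed

text \<open>Pairing \<open>x ^ j\<close> with \<open>Q_poly s m\<close> gives the determinant of a bordered Hankel
  matrix whose last column repeats column \<open>j\<close>.\<close>

lemma seq_functional_monom_mult_Q_poly:
  assumes "j < m" "2 * m \<le> length s"
  shows "seq_functional s (monom 1 j * Q_poly s m) = 0"
proof -
  have "monom 1 j * Q_poly s m = monom 1 j * (\<Sum>i\<le>m. monom (coeff (Q_poly s m) i) i)"
    by (simp only: poly_as_sum_of_monoms'[OF degree_Q_poly])
  also have "\<dots> = (\<Sum>i\<le>m. monom (coeff (Q_poly s m) i) (i + j))"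
    by (simp add: sum_distrib_left mult_monom add.commute)
  finally have "seq_functional s (monom 1 j * Q_poly s m)
      = (\<Sum>i\<le>m. s ! (i + j) * coeff (Q_poly s m) i)"
    using assms by (simp add: seq_functional_sum seq_functional_monom mult.commute)
  also have "\<dots> = det (bordered_hankel s m (\<lambda>i. s ! (i + j)))"
    by (simp add: det_bordered_hankel)
  also have "\<dots> = 0"
  proof (rule det_identical_columns)
    show "bordered_hankel s m (\<lambda>i. s ! (i + j)) \<in> carrier_mat (m + 1) (m + 1)"
      by (simp add: bordered_hankel_def)
    show "col (bordered_hankel s m (\<lambda>i. s ! (i + j))) j
        = col (bordered_hankel s m (\<lambda>i. s ! (i + j))) m"
      by (rule eq_vecI) (use assms in \<open>auto simp: bordered_hankel_def\<close>)
  qed (use assms in auto)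
  finally show ?thesis .
qed

lemma Q_poly_orthogonal:
  assumes "degree r < m" "2 * m \<le> length s"
  shows "seq_functional s (r * Q_poly s m) = 0"
proof -
  have "r * Q_poly s m = (\<Sum>j\<le>degree r. monom (coeff r j) j) * Q_poly s m"
    by (simp add: poly_as_sum_of_monoms)
  also have "\<dots> = (\<Sum>j\<le>degree r. Polynomial.smult (coeff r j) (monom 1 j * Q_poly s m))"
    by (simp add: sum_distrib_right smult_monom_mult)
  finally show ?thesis
    using assms by (simp add: seq_functional_sum seq_functional_smult seq_functional_monom_mult_Q_poly)
qed

lemma hankel_det_nonzero:
  assumes "strictly_positive_on a b s" "2 * m \<le> length s"
  shows "det (mat m m (\<lambda>(i, j). s ! (i + j))) \<noteq> 0"
proof
  define H where "H = mat m m (\<lambda>(i, j). s ! (i + j))"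
  have H: "H \<in> carrier_mat m m" by (simp add: H_def)
  assume "det (mat m m (\<lambda>(i, j). s ! (i + j))) = 0"
  then obtain v where v: "v \<in> carrier_vec m" "v \<noteq> 0\<^sub>v m" "H *\<^sub>v v = 0\<^sub>v m"
    using det_0_iff_vec_prod_zero[OF H] by (auto simp: H_def)
  define p where "p = (\<Sum>j<m. monom (v $ j) j)"
  obtain j where j: "j < m" "v $ j \<noteq> 0"
    using v(1,2) by (metis carrier_vecD eq_vecI index_zero_vec)
  then have "coeff p j \<noteq> 0" by (simp add: p_def coeff_sum coeff_monom)
  then have "p * p \<noteq> 0" by auto
  moreover have "degree (p * p) < length s"
  proof -
    have "degree p \<le> m - 1"
      unfolding p_def by (intro degree_sum_le) (auto intro: order.trans[OF degree_monom_le])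
    then show ?thesis using degree_mult_le[of p p] assms(2) j(1) by linarith
  qed
  ultimately have "seq_functional s (p * p) > 0"
    using assms(1) unfolding strictly_positive_on_def by simp
  moreover have "seq_functional s (p * p) = (\<Sum>i<m. v $ i * (H *\<^sub>v v) $ i)"
  proof -
    have "seq_functional s (p * p) = (\<Sum>i<m. \<Sum>j<m. v $ i * v $ j * s ! (i + j))"
      using assms(2)
      by (simp add: p_def sum_product mult_monom seq_functional_sum seq_functional_monom)
    also have "\<dots> = (\<Sum>i<m. v $ i * (H *\<^sub>v v) $ i)"
      using v(1) by (simp add: H_def scalar_prod_def atLeast0LessThan sum_distrib_left mult_ac)
    finally show ?thesis .
  qed
  ultimately show False using v(3) by simp
qed

lemma Q_poly_nonzero:
  assumes "strictly_positive_on a b s" "2 * m \<le> length s"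
  shows "coeff (Q_poly s m) m \<noteq> 0"
proof -
  have "mat_delete (bordered_hankel s m (\<lambda>_. 0)) m m = mat m m (\<lambda>(i, j). s ! (i + j))"
    by (rule eq_matI) (auto simp: mat_delete_def bordered_hankel_def)
  moreover have "coeff (Q_poly s m) m = cofactor (bordered_hankel s m (\<lambda>_. 0)) m m"
    by (rule coeff_Q_poly) simp
  ultimately show ?thesis
    using hankel_det_nonzero[OF assms] by (simp add: cofactor_def)
qed

text \<open>The classical argument that an orthogonal polynomial has only simple roots, all inside
  the interval: multiplying by the node polynomial of its odd-order interior roots yields a
  polynomial of constant sign on the interval, which the functional would have to annihilate.\<close>

lemma orthogonal_poly_roots:
  assumes "strictly_positive_on a b u" "length u = 2 * m"
    and "q \<noteq> 0" "degree q \<le> m" "\<forall>r. degree r < m \<longrightarrow> seq_functional u (r * q) = 0"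
  shows "degree q = m" "card {t. poly q t = 0} = m" "{t. poly q t = 0} \<subseteq> {a<..<b}"
proof -
  define R where "R = {z \<in> {a<..<b}. odd (order z q)}"
  have R_roots: "R \<subseteq> {t. poly q t = 0}"
    using order_root by (fastforce simp: R_def)
  have fin_roots: "finite {t. poly q t = 0}" using poly_roots_finite[OF assms(3)] .
  then have finR: "finite R" using R_roots finite_subset by blast
  define h where "h = node_poly R * q"
  have h0: "h \<noteq> 0" using assms(3) node_poly_nonzero[OF finR] by (simp add: h_def)
  have "even (order z h)" if "z \<in> {a<..<b}" for z
    using that h0 by (simp add: h_def order_mult order_node_poly[OF finR]) (auto simp: R_def)
  then have sign: "(\<forall>x\<in>{a..b}. poly h x \<ge> 0) \<or> (\<forall>x\<in>{a..b}. poly (- h) x \<ge> 0)"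
    using even_root_orders_imp_constant_sign[OF h0] by auto
  have "m \<le> card R"
  proof (rule ccontr)
    assume "\<not> m \<le> card R"
    then have "seq_functional u h = 0"
      using assms(5) degree_node_poly[OF finR] by (simp add: h_def)
    moreover have "degree h < length u"
      using \<open>\<not> m \<le> card R\<close> degree_mult_le[of "node_poly R" q] assms(2,4)
        degree_node_poly[OF finR] by (simp add: h_def)
    ultimately show False
      using sign assms(1) h0 unfolding strictly_positive_on_def
      by (metis degree_minus less_irrefl neg_equal_0_iff_equal seq_functional_uminus)
  qed
  moreover have "card {t. poly q t = 0} \<le> degree q"
    using card_poly_roots_bound[OF assms(3)] .
  moreover have "card R \<le> card {t. poly q t = 0}"
    using card_mono[OF fin_roots R_roots] .
  ultimately have "card R = m" "degree q = m" "card {t. poly q t = 0} = m"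
    using assms(4) by linarith+
  then show "degree q = m" "card {t. poly q t = 0} = m" by simp_all
  have "R = {t. poly q t = 0}"
    using card_subset_eq[OF fin_roots R_roots] \<open>card R = m\<close> \<open>card {t. poly q t = 0} = m\<close>
    by simp
  moreover have "R \<subseteq> {a<..<b}" unfolding R_def by blast
  ultimately show "{t. poly q t = 0} \<subseteq> {a<..<b}" by simp
qed

lemma quadrature_at_roots_of_orthogonal_poly:
  assumes "length u = 2 * m" "q \<noteq> 0" "degree q = m" "card {t. poly q t = 0} = m"
    and "\<forall>r. degree r < m \<longrightarrow> seq_functional u (r * q) = 0"
  shows "is_quadrature u {t. poly q t = 0}
           (\<lambda>x. seq_functional u (lagrange_basis {t. poly q t = 0} x))"
  unfolding is_quadrature_def
proof (intro conjI allI impI)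
  define X where "X = {t. poly q t = 0}"
  show fin: "finite {t. poly q t = 0}" using assms(2) by (rule poly_roots_finite)
  fix P :: "real poly"
  assume "degree P < length u"
  then have "m > 0" using assms(1) by simp
  have dmod: "degree (P mod q) < m"
    using degree_mod_less[OF assms(2), of P] assms(3) \<open>m > 0\<close> by auto
  have "degree (P div q) < m"
  proof (cases "P div q = 0")
    case False
    have "degree (P div q) + m = degree (P - P mod q)"
      using False assms(2,3) by (simp add: degree_mult_eq minus_mod_eq_div_mult)
    also have "\<dots> \<le> max (degree P) (degree (P mod q))" by (rule degree_diff_le_max)
    finally show ?thesis using \<open>degree P < length u\<close> dmod assms(1) by linarith
  qed (use \<open>m > 0\<close> in simp)
  then have "seq_functional u (P div q * q) = 0" using assms(5) by blast
  moreover have "degree (P mod q) < card X"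
    using dmod assms(4) by (simp add: X_def)
  ultimately have "seq_functional u P
      = (\<Sum>x\<in>X. poly (P mod q) x * seq_functional u (lagrange_basis X x))"
    using seq_functional_lagrange_interpolation[of X "P mod q" u] fin
    by (metis X_def add_0 div_mult_mod_eq seq_functional_add)
  also have "\<dots> = (\<Sum>x\<in>X. seq_functional u (lagrange_basis X x) * poly P x)"
    by (rule sum.cong) (auto simp: X_def poly_mod)
  finally show "seq_functional u P = (\<Sum>x\<in>{t. poly q t = 0}.
      seq_functional u (lagrange_basis {t. poly q t = 0} x) * poly P x)"
    by (simp add: X_def)
qed

lemma gauss_quadrature:
  assumes "strictly_positive_on a b u" "length u = 2 * m"
  obtains X w where "is_quadrature u X w" "X = {t. poly (Q_poly u m) t = 0}" "X \<subseteq> {a<..<b}"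
    "card X = m" "\<forall>x\<in>X. w x > 0"
proof -
  define q where "q = Q_poly u m"
  have orth: "\<forall>r. degree r < m \<longrightarrow> seq_functional u (r * q) = 0"
    using assms(2) by (simp add: q_def Q_poly_orthogonal)
  have "coeff q m \<noteq> 0" using Q_poly_nonzero[OF assms(1), of m] assms(2) by (simp add: q_def)
  then have "q \<noteq> 0" by auto
  note roots = orthogonal_poly_roots[OF assms \<open>q \<noteq> 0\<close> _ orth, unfolded q_def, OF degree_Q_poly]
  note quad = quadrature_at_roots_of_orthogonal_poly[OF assms(2) \<open>q \<noteq> 0\<close>[unfolded q_def] roots(1,2)
      orth[unfolded q_def]]
  show ?thesis
    using quadrature_weight_pos[OF quad assms(1)] roots assms(2) by (intro that[OF quad]) auto
qed

text \<open>Multiplying by \<open>b - x\<close> turns the moments of a measure on \<open>[a, b]\<close> into the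
  moments \<open>b s\<^sub>j - s\<^sub>j\<^sub>+\<^sub>1\<close> of another one.\<close>

definition tilted_seq :: "real \<Rightarrow> real list \<Rightarrow> real list" where
  "tilted_seq b s = map (\<lambda>j. b * s ! j - s ! (j + 1)) [0..<length s - 1]"

lemma seq_functional_tilted_seq:
  assumes "degree g < length s - 1"
  shows "seq_functional (tilted_seq b s) g = seq_functional s ([:b, -1:] * g)"
proof -
  obtain c s' where s: "s = c # s'" using assms by (cases s) auto
  have "[:b, -1:] * g = Polynomial.smult b g - pCons 0 g" by (simp add: algebra_simps)
  then have "seq_functional s ([:b, -1:] * g)
      = seq_functional s (Polynomial.smult b g) - seq_functional s (pCons 0 g)"
    by (simp only: seq_functional_diff)
  also have "\<dots> = b * seq_functional s g - seq_functional s' g"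
    by (simp add: seq_functional_smult s seq_functional_pCons)
  also have "seq_functional s g = (\<Sum>j<length s'. coeff g j * s ! j)"
    using assms by (simp add: s seq_functional_def sum.lessThan_Suc coeff_eq_0)
  also have "seq_functional s' g = (\<Sum>j<length s'. coeff g j * s ! (j + 1))"
    by (simp add: s seq_functional_def)
  also have "b * (\<Sum>j<length s'. coeff g j * s ! j) - (\<Sum>j<length s'. coeff g j * s ! (j + 1))
      = seq_functional (tilted_seq b s) g"
    by (simp add: seq_functional_def tilted_seq_def s algebra_simps sum_subtractf sum_distrib_left)
  finally show ?thesis ..
qed

lemma strictly_positive_on_tilted_seq:
  assumes "strictly_positive_on a c s" "c \<le> b"
  shows "strictly_positive_on a c (tilted_seq b s)"
proof -
  have "seq_functional (tilted_seq b s) g > 0"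
    if "degree g < length (tilted_seq b s)" "\<forall>x\<in>{a..c}. poly g x \<ge> 0" "g \<noteq> 0" for g
  proof -
    have "degree ([:b, -1:] * g) < length s"
      using that(1) degree_mult_le[of "[:b, -1:]" g] by (simp add: tilted_seq_def degree_pCons_le)
    moreover have "poly ([:b, -1:] * g) x = (b - x) * poly g x" for x
      by (simp add: algebra_simps)
    then have "\<forall>x\<in>{a..c}. poly ([:b, -1:] * g) x \<ge> 0"
      using that(2) assms(2) by simp
    moreover have "[:b, -1:] * g \<noteq> 0"
      using that(3) by (simp only: mult_eq_0_iff pCons_eq_0_iff) simp
    ultimately have "seq_functional s ([:b, -1:] * g) > 0"
      using assms(1) unfolding strictly_positive_on_def by blast
    moreover have "seq_functional (tilted_seq b s) g = seq_functional s ([:b, -1:] * g)"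
      by (rule seq_functional_tilted_seq) (use that(1) in \<open>simp add: tilted_seq_def\<close>)
    ultimately show ?thesis by simp
  qed
  then show ?thesis
    unfolding strictly_positive_on_def positive_on_def
    by (metis less_imp_le order_refl seq_functional_0)
qed

lemma quadrature_insert_node:
  assumes "is_quadrature (tilted_seq b s) Y \<rho>" "b \<notin> Y" "s \<noteq> []"
  shows "is_quadrature s (insert b Y)
           (\<lambda>z. if z = b then s ! 0 - (\<Sum>y\<in>Y. \<rho> y / (b - y)) else \<rho> z / (b - z))"
  unfolding is_quadrature_def
proof (intro conjI allI impI)
  show fin: "finite (insert b Y)" using assms(1) by (simp add: is_quadrature_finite)
  fix P :: "real poly"
  assume "degree P < length s"
  define g where "g = synthetic_div P b"
  have P: "P = [:b, -1:] * (- g) + [:poly P b:]"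
    using synthetic_div_correct'[of b P] by (simp add: g_def)
  have "seq_functional s ([:b, -1:] * (- g)) = - (\<Sum>y\<in>Y. \<rho> y * poly g y)"
  proof (cases "g = 0")
    case False
    then have "degree (- g) < length (tilted_seq b s)"
      using \<open>degree P < length s\<close>
      by (simp add: g_def degree_synthetic_div tilted_seq_def synthetic_div_eq_0_iff)
    then have "seq_functional s ([:b, -1:] * (- g)) = seq_functional (tilted_seq b s) (- g)"
      by (intro seq_functional_tilted_seq[symmetric]) (simp add: tilted_seq_def)
    then show ?thesis
      using is_quadratureD[OF assms(1) \<open>degree (- g) < _\<close>] by (simp add: sum_negf)
  qed simp
  moreover have "poly g y = (poly P b - poly P y) / (b - y)" if "y \<in> Y" for y
  proof -
    have "poly P y = poly P b - (b - y) * poly g y"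
      using arg_cong[OF P, of "\<lambda>p. poly p y"] by (simp add: algebra_simps)
    moreover have "b - y \<noteq> 0" using that assms(2) by auto
    ultimately show ?thesis by (simp add: field_simps)
  qed
  ultimately have "seq_functional s P
      = poly P b * s ! 0 - (\<Sum>y\<in>Y. \<rho> y * ((poly P b - poly P y) / (b - y)))"
    using assms(3) by (subst P) (simp add: seq_functional_add seq_functional_const)
  also have "\<dots> = (s ! 0 - (\<Sum>y\<in>Y. \<rho> y / (b - y))) * poly P b + (\<Sum>y\<in>Y. \<rho> y / (b - y) * poly P y)"
    by (simp add: algebra_simps diff_divide_distrib sum_subtractf sum_distrib_left sum_distrib_right)
  finally show "seq_functional s P = (\<Sum>z\<in>insert b Y.
      (if z = b then s ! 0 - (\<Sum>y\<in>Y. \<rho> y / (b - y)) else \<rho> z / (b - z)) * poly P z)"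
    using fin assms(2) by (simp add: sum.insert_if cong: if_cong) (rule sum.cong; auto)
qed

text \<open>Radau quadrature: a Gauss rule for the tilted sequence, plus the prescribed node \<open>b\<close>.\<close>

lemma radau_quadrature:
  assumes "length s = 2 * m + 1" "strictly_positive_on a c s" "c \<le> b"
  obtains Y v where "is_quadrature s (insert b Y) v" "Y \<subseteq> {a<..<c}" "b \<notin> Y" "card Y = m"
    "\<forall>x\<in>insert b Y. v x > 0"
proof -
  have "length (tilted_seq b s) = 2 * m" using assms(1) by (simp add: tilted_seq_def)
  then obtain Y \<rho> where Y: "is_quadrature (tilted_seq b s) Y \<rho>" "Y \<subseteq> {a<..<c}" "card Y = m"
    using gauss_quadrature[OF strictly_positive_on_tilted_seq[OF assms(2,3)]] by blast
  then have "b \<notin> Y" using assms(3) by auto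
  moreover have "s \<noteq> []" using assms(1) by auto
  ultimately have quad: "is_quadrature s (insert b Y)
      (\<lambda>z. if z = b then s ! 0 - (\<Sum>y\<in>Y. \<rho> y / (b - y)) else \<rho> z / (b - z))"
    using Y(1) by (rule quadrature_insert_node[rotated])
  have "2 * card (insert b Y) \<le> length s + 1"
    using is_quadrature_finite[OF Y(1)] \<open>b \<notin> Y\<close> Y(3) assms(1) by simp
  then show ?thesis
    using quadrature_weight_pos[OF quad assms(2)] by (intro that[OF quad Y(2) \<open>b \<notin> Y\<close> Y(3)]) blast
qed

text \<open>Prepending \<open>c\<close> to the moments of a measure on \<open>(0, \<infinity>)\<close>: dividing the weights by the
  nodes shifts the moment index, and the defect is placed at the node \<open>0\<close>.\<close>

lemma quadrature_Cons:
  assumes "is_quadrature s X w" "X \<subseteq> {0<..}" "s \<noteq> []"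
  shows "is_quadrature (c # s) (insert 0 X) (\<lambda>x. if x = 0 then c - (\<Sum>y\<in>X. w y / y) else w x / x)"
  unfolding is_quadrature_def
proof (intro conjI allI impI)
  have fin: "finite X" using assms(1) by (rule is_quadrature_finite)
  then show "finite (insert 0 X)" by simp
  fix P :: "real poly"
  assume "degree P < length (c # s)"
  obtain a R where P: "P = pCons a R" by (cases P)
  have "degree R < length s"
    using \<open>degree P < length (c # s)\<close> assms(3) by (cases "R = 0") (auto simp: P)
  then have "seq_functional (c # s) P = c * a + (\<Sum>x\<in>X. w x * poly R x)"
    using assms(1) by (simp add: P seq_functional_pCons is_quadratureD)
  also have "(\<Sum>x\<in>X. w x * poly R x) = (\<Sum>x\<in>X. w x / x * poly P x - a * (w x / x))"
    using assms(2) by (intro sum.cong) (auto simp: P field_simps)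
  also have "\<dots> = (\<Sum>x\<in>X. w x / x * poly P x) - a * (\<Sum>y\<in>X. w y / y)"
    by (simp add: sum_subtractf sum_distrib_left)
  also have "c * a + ((\<Sum>x\<in>X. w x / x * poly P x) - a * (\<Sum>y\<in>X. w y / y))
      = (c - (\<Sum>y\<in>X. w y / y)) * poly P 0 + (\<Sum>x\<in>X. w x / x * poly P x)"
    by (simp add: P algebra_simps)
  also have "\<dots> = (\<Sum>x\<in>insert 0 X. (if x = 0 then c - (\<Sum>y\<in>X. w y / y) else w x / x) * poly P x)"
  proof -
    have "0 \<notin> X" using assms(2) by auto
    then have "(\<Sum>x\<in>X. w x / x * poly P x)
        = (\<Sum>x\<in>X. (if x = 0 then c - (\<Sum>y\<in>X. w y / y) else w x / x) * poly P x)"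
      by (intro sum.cong) auto
    then show ?thesis using fin \<open>0 \<notin> X\<close> by (simp only: sum.insert) simp
  qed
  finally show "seq_functional (c # s) P = (\<Sum>x\<in>insert 0 X.
      (if x = 0 then c - (\<Sum>y\<in>X. w y / y) else w x / x) * poly P x)" .
qed

lemma quadrature_extrapolate_node:
  assumes "is_quadrature u (insert z X) v" "z \<notin> X" "finite S" "X \<subseteq> S" "length u \<le> card S"
  shows "is_quadrature u S (\<lambda>y. (if y \<in> X then v y else 0) + v z * poly (lagrange_basis S y) z)"
  unfolding is_quadrature_def
proof (intro conjI allI impI)
  show "finite S" by fact
  fix P :: "real poly"
  assume deg: "degree P < length u"
  have "finite X" using assms(3,4) finite_subset by blast
  have "seq_functional u P = v z * poly P z + (\<Sum>y\<in>X. v y * poly P y)"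
    using is_quadratureD[OF assms(1) deg] \<open>finite X\<close> assms(2) by simp
  also have "poly P z = (\<Sum>y\<in>S. poly P y * poly (lagrange_basis S y) z)"
    using lagrange_interpolation[OF assms(3), of P] deg assms(5)
    by (metis (no_types, lifting) order_less_le_trans poly_smult poly_sum sum.cong)
  also have "(\<Sum>y\<in>X. v y * poly P y) = (\<Sum>y\<in>S. (if y \<in> X then v y else 0) * poly P y)"
  proof -
    have "(\<Sum>y\<in>S. (if y \<in> X then v y else 0) * poly P y) = (\<Sum>y\<in>S \<inter> X. v y * poly P y)"
      using assms(3) by (simp add: sum.inter_restrict if_distrib[of "\<lambda>c. c * _"] cong: if_cong)
    then show ?thesis using assms(4) by (simp add: Int_absorb1)
  qed
  finally show "seq_functional u P
      = (\<Sum>y\<in>S. ((if y \<in> X then v y else 0) + v z * poly (lagrange_basis S y) z) * poly P y)"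
    by (simp add: sum_distrib_left sum.distrib algebra_simps)
qed

lemma prod_sign:
  fixes f :: "'a \<Rightarrow> real"
  assumes "finite A" "\<forall>y\<in>A. f y \<noteq> 0"
  shows "(-1) ^ card {y\<in>A. f y < 0} * prod f A > 0"
  using assms
proof (induction A rule: finite_induct)
  case (insert a A)
  then have IH: "(-1) ^ card {y\<in>A. f y < 0} * prod f A > 0" by simp
  have fin: "finite {y\<in>A. f y < 0}" using insert.hyps(1) by simp
  show ?case
  proof (cases "f a < 0")
    case True
    then have "{y\<in>insert a A. f y < 0} = insert a {y\<in>A. f y < 0}" by auto
    then have "card {y\<in>insert a A. f y < 0} = Suc (card {y\<in>A. f y < 0})"
      using insert.hyps fin by simp
    then show ?thesis
      using True IH insert.hyps by (simp add: mult.left_commute mult_neg_pos)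
  next
    case False
    then have "f a > 0" using insert.prems by (simp add: less_le)
    moreover have "{y\<in>insert a A. f y < 0} = {y\<in>A. f y < 0}" using False by auto
    ultimately show ?thesis using IH insert.hyps by (simp add: mult.left_commute)
  qed
qed simp

lemma lagrange_basis_0_sign:
  assumes "finite S" "S \<subseteq> {0<..}" "z \<in> S"
  shows "(-1) ^ card {y\<in>S. y < z} * poly (lagrange_basis S z) 0 > 0"
proof -
  have "{y\<in>S - {z}. y / (y - z) < 0} = {y\<in>S. y < z}"
    using assms(2) by (auto simp: divide_less_0_iff)
  moreover have "\<forall>y\<in>S - {z}. y / (y - z) \<noteq> 0" using assms(2) by auto
  ultimately show ?thesis
    using prod_sign[of "S - {z}" "\<lambda>y. y / (y - z)"] assms(1) by (simp add: poly_lagrange_basis_0)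
qed

lemma eventually_lagrange_basis_0_small:
  assumes "finite F" "F \<subseteq> {0<..}" "z \<in> F" "e > 0"
  shows "eventually (\<lambda>\<epsilon>. \<bar>poly (lagrange_basis (insert \<epsilon> F) z) 0\<bar> < e) (at_right 0)"
proof -
  define C where "C = (\<Prod>y\<in>F - {z}. y / (y - z))"
  have "z > 0" using assms(2,3) by auto
  then have "((\<lambda>\<epsilon>. \<epsilon> / (\<epsilon> - z) * C) \<longlongrightarrow> 0 / (0 - z) * C) (at_right 0)"
    by (intro tendsto_intros) auto
  moreover have "\<forall>y\<in>F. eventually (\<lambda>\<epsilon>. \<epsilon> < y) (at_right 0)"
    using assms(2) by (auto intro: order_tendstoD(2)[OF tendsto_ident_at])
  then have "eventually (\<lambda>\<epsilon>. \<forall>y\<in>F. \<epsilon> < y) (at_right 0)"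
    by (rule eventually_ball_finite[OF assms(1)])
  then have "eventually (\<lambda>\<epsilon>. \<epsilon> / (\<epsilon> - z) * C = poly (lagrange_basis (insert \<epsilon> F) z) 0) (at_right 0)"
  proof eventually_elim
    case (elim \<epsilon>)
    then have "\<epsilon> \<notin> F" "\<epsilon> \<noteq> z" using assms(3) by auto
    then have "insert \<epsilon> F - {z} = insert \<epsilon> (F - {z})" by auto
    then show ?case
      using \<open>\<epsilon> \<notin> F\<close> assms(1) by (simp add: poly_lagrange_basis_0 C_def)
  qed
  ultimately have "((\<lambda>\<epsilon>. poly (lagrange_basis (insert \<epsilon> F) z) 0) \<longlongrightarrow> 0) (at_right 0)"
    by (simp add: tendsto_cong)
  from tendstoD[OF this assms(4)] show ?thesis by (simp add: dist_real_def)
qed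

lemma small_extrapolation_node:
  assumes "finite X" "X \<subseteq> F" "finite F" "F \<subseteq> {0<..}" "\<forall>z\<in>X. e z > 0" "c > 0"
  obtains \<epsilon> where "0 < \<epsilon>" "\<epsilon> < c" "\<forall>z\<in>X. \<bar>poly (lagrange_basis (insert \<epsilon> F) z) 0\<bar> < e z"
proof -
  have "eventually (\<lambda>\<epsilon>. \<forall>z\<in>X. \<bar>poly (lagrange_basis (insert \<epsilon> F) z) 0\<bar> < e z) (at_right 0)"
    using assms(2-5)
    by (intro eventually_ball_finite[OF assms(1)] ballI eventually_lagrange_basis_0_small) auto
  moreover note eventually_at_right_less[of 0]
  moreover have "eventually (\<lambda>\<epsilon>. \<epsilon> < c) (at_right 0)"
    using order_tendstoD(2)[OF tendsto_ident_at assms(6)] .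
  ultimately have "eventually (\<lambda>\<epsilon>. 0 < \<epsilon> \<and> \<epsilon> < c \<and>
      (\<forall>z\<in>X. \<bar>poly (lagrange_basis (insert \<epsilon> F) z) 0\<bar> < e z)) (at_right 0)"
    by eventually_elim blast
  then show ?thesis using eventually_happens that by force
qed

lemma finite_strict_mono_enumeration:
  assumes "finite X"
  obtains x :: "nat \<Rightarrow> real" where "strict_mono_on {..<card X} x" "X = x ` {..<card X}"
proof -
  obtain xs where xs: "sorted_wrt (<) xs" "set xs = X" "length xs = card X"
    using finite_set_strict_sorted[OF assms] by blast
  show ?thesis
  proof (rule that[of "nth xs"])
    show "strict_mono_on {..<card X} (nth xs)"
      using xs by (auto simp: strict_mono_on_def sorted_wrt_nth_less)
    show "X = nth xs ` {..<card X}" using xs by (auto simp: set_conv_nth)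
  qed
qed

lemma interlacing_strict_mono:
  fixes x :: "nat \<Rightarrow> real"
  assumes "strict_mono_on {..<k} x"
  obtains q :: "nat \<Rightarrow> real" where "strict_mono q" "\<forall>i<k. q (2 * i + 1) = x i"
proof
  define q where "q j = (if j = 0 then x 0 - 1 else if odd j \<and> j < 2 * k then x (j div 2)
    else if j < 2 * k then (x (j div 2 - 1) + x (j div 2)) / 2 else x (k - 1) + j)" for j
  show "\<forall>i<k. q (2 * i + 1) = x i" by (simp add: q_def)
  have less: "x i < x j" if "i < j" "j < k" for i j
    using assms that by (simp add: strict_mono_on_def)
  have "q j < q (Suc j)" for j
  proof -
    consider "j = 0" | "j > 0" "j < 2 * k" "odd j" | "j > 0" "j < 2 * k" "even j"
      | "2 * k \<le> j" "j > 0"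
      by linarith
    then show ?thesis
    proof cases
      case 1 then show ?thesis by (auto simp: q_def)
    next
      case 2
      then obtain i where i: "j = 2 * i + 1" "i < k" by (metis oddE add_lessD1 mult_less_cancel1
            zero_less_numeral Suc_eq_plus1 less_Suc_eq_le le_less_trans lessI)
      show ?thesis
      proof (cases "Suc j < 2 * k")
        case True
        then have "x i < x (Suc i)" using i by (intro less) auto
        then show ?thesis using i True by (simp add: q_def)
      next
        case False
        then have "i = k - 1" using i by linarith
        then show ?thesis using i False by (simp add: q_def)
      qed
    next
      case 3
      then obtain i where i: "j = 2 * i" "0 < i" "i < k" by (auto elim!: evenE)
      then have "x (i - 1) < x i" by (intro less) auto
      then show ?thesis using i by (simp add: q_def)
    next
      case 4
      then show ?thesis by (simp add: q_def)
    qed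
  qed
  then show "strict_mono q" by (simp add: strict_mono_Suc_iff)
qed

lemma card_less_in_strict_mono_image:
  fixes p :: "nat \<Rightarrow> real"
  assumes "strict_mono p" "j < N"
  shows "card {y \<in> p ` {..<N}. y < p j} = j"
proof -
  have "{y \<in> p ` {..<N}. y < p j} = p ` {..<j}"
    using assms by (auto simp: strict_mono_less)
  then show ?thesis
    using strict_mono_imp_inj_on[OF assms(1)] by (simp add: card_image)
qed

lemma interlacing_nodes:
  assumes "finite X" "X \<subseteq> {0<..}" "X \<noteq> {}" "2 * card X \<le> N" "N \<le> 2 * card X + 1"
  obtains q :: "nat \<Rightarrow> real" where "strict_mono q" "0 < q 1" "X \<subseteq> q ` {1..<N}"
    "\<And>j. j < N \<Longrightarrow> odd j \<Longrightarrow> q j \<in> X"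
proof -
  obtain x where x: "strict_mono_on {..<card X} x" "X = x ` {..<card X}"
    using finite_strict_mono_enumeration[OF assms(1)] by blast
  obtain q where q: "strict_mono q" "\<forall>i<card X. q (2 * i + 1) = x i"
    using interlacing_strict_mono[OF x(1)] by blast
  have "card X > 0" using assms(1,3) by (simp add: card_gt_0_iff)
  show ?thesis
  proof (rule that[OF q(1)])
    have "q 1 \<in> X" using q(2)[rule_format, of 0] x(2) \<open>card X > 0\<close> by auto
    then show "0 < q 1" using assms(2) by auto
    show "X \<subseteq> q ` {1..<N}"
    proof
      fix z assume "z \<in> X"
      then obtain i where "i < card X" "z = x i" using x(2) by auto
      then show "z \<in> q ` {1..<N}"
        using q(2) assms(4) by (intro image_eqI[of _ _ "2 * i + 1"]) auto
    qed
    show "q j \<in> X" if "j < N" "odd j" for j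
    proof -
      obtain i where "j = 2 * i + 1" using \<open>odd j\<close> by (rule oddE)
      then show ?thesis using q(2) x(2) that(1) assms(5) by auto
    qed
  qed
qed

lemma extrapolated_weight_pos:
  fixes p :: "nat \<Rightarrow> real"
  assumes "strict_mono p" "p ` {..<N} \<subseteq> {0<..}" "j < N" "c > 0"
    and "p j \<in> X \<Longrightarrow> \<bar>c * poly (lagrange_basis (p ` {..<N}) (p j)) 0\<bar> < v (p j)"
    and "p j \<notin> X \<Longrightarrow> even j"
  shows "(if p j \<in> X then v (p j) else 0) + c * poly (lagrange_basis (p ` {..<N}) (p j)) 0 > 0"
proof (cases "p j \<in> X")
  case True
  then show ?thesis using assms(5) by (simp add: abs_less_iff)
next
  case False
  have "(-1) ^ j * poly (lagrange_basis (p ` {..<N}) (p j)) 0 > 0"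
    using lagrange_basis_0_sign[OF _ assms(2), of "p j"] card_less_in_strict_mono_image[OF assms(1,3)]
      assms(3) by simp
  then show ?thesis using False assms(4,6) by simp
qed

text \<open>The mass at \<open>0\<close> is spread by Lagrange extrapolation over nodes interlacing the others,
  the first one \<open>\<epsilon>\<close> close to \<open>0\<close>.  The extrapolation weights alternate in sign, so they are positive
  at the new nodes, while at the old nodes they perturb the old weights arbitrarily little.\<close>

lemma mass_at_origin_imp_strictly_positive_on_pos_reals:
  assumes quad: "is_quadrature u (insert 0 X) v" and X: "X \<subseteq> {0<..}" "X \<noteq> {}"
    and pos: "\<forall>x\<in>insert 0 X. v x > 0"
    and len: "2 * card X \<le> length u" "length u \<le> 2 * card X + 1"
  shows "strictly_positive_on_pos_reals u"
proof -
  define N where "N = length u"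
  have finX: "finite X" using is_quadrature_finite[OF quad] by simp
  obtain q where q: "strict_mono q" "0 < q 1" "X \<subseteq> q ` {1..<N}" "\<And>j. j < N \<Longrightarrow> odd j \<Longrightarrow> q j \<in> X"
    using interlacing_nodes[OF finX X len[folded N_def]] by blast
  have F_pos: "q ` {1..<N} \<subseteq> {0<..}"
  proof
    fix y assume "y \<in> q ` {1..<N}"
    then obtain j where "1 \<le> j" "y = q j" by auto
    then show "y \<in> {0<..}" using q(2) strict_mono_less_eq[OF q(1), of 1 j] by simp
  qed
  obtain \<epsilon> where \<epsilon>: "0 < \<epsilon>" "\<epsilon> < q 1"
    "\<forall>z\<in>X. \<bar>poly (lagrange_basis (insert \<epsilon> (q ` {1..<N})) z) 0\<bar> < v z / v 0"
    using small_extrapolation_node[OF finX q(3) _ F_pos _ q(2), of "\<lambda>z. v z / v 0"] pos by auto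
  define p where "p = q(0 := \<epsilon>)"
  have "p n < p (Suc n)" for n
    using \<epsilon>(2) q(1) by (cases n) (auto simp: p_def strict_mono_Suc_iff)
  then have p: "strict_mono p" by (simp add: strict_mono_Suc_iff)
  have "card X > 0" using finX X(2) by (simp add: card_gt_0_iff)
  then have "{..<N} = insert 0 {1..<N}" "{1..<N} \<inter> {j. 0 < j} = {1..<N}"
    using len by (auto simp: N_def)
  then have S: "insert \<epsilon> (q ` {1..<N}) = p ` {..<N}" by (simp add: p_def fun_upd_image)
  have S_pos: "p ` {..<N} \<subseteq> {0<..}" using F_pos \<epsilon>(1) by (simp flip: S)
  define w where "w = (\<lambda>y. (if y \<in> X then v y else 0) + v 0 * poly (lagrange_basis (p ` {..<N}) y) 0)"
  have "X \<subseteq> p ` {..<N}" using q(3) unfolding S[symmetric] by blast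
  moreover have card_S: "card (p ` {..<N}) = N"
    using strict_mono_imp_inj_on[OF p] by (simp add: card_image)
  ultimately have quadS: "is_quadrature u (p ` {..<N}) w"
    unfolding w_def using X(1) by (intro quadrature_extrapolate_node[OF quad]) (auto simp: N_def)
  have "w (p j) > 0" if "j < N" for j
    unfolding w_def
  proof (rule extrapolated_weight_pos[OF p S_pos that])
    show "v 0 > 0" using pos by simp
    show "\<bar>v 0 * poly (lagrange_basis (p ` {..<N}) (p j)) 0\<bar> < v (p j)" if "p j \<in> X"
      using \<epsilon>(3)[unfolded S] that pos by (simp add: abs_mult pos_less_divide_eq mult.commute)
    show "even j" if "p j \<notin> X"
      using that q(4)[OF \<open>j < N\<close>] \<open>j < N\<close> by (cases j) (auto simp: p_def)
  qed
  then show ?thesis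
    using quadrature_imp_strictly_positive_on_pos_reals[OF quadS _ S_pos] card_S by (simp add: N_def)
qed

lemma Cons_on_boundary_iff:
  assumes quad: "is_quadrature s X w" and X: "X \<subseteq> {0<..}" "card X = m" "m \<ge> 1"
    and len: "length s = 2 * m" and w: "\<forall>x\<in>X. w x > 0"
  shows "(positive_on_pos_reals (c # s) \<and> \<not> strictly_positive_on_pos_reals (c # s))
           \<longleftrightarrow> c = (\<Sum>x\<in>X. w x / x)"
proof -
  define v where "v = (\<lambda>x. if x = 0 then c - (\<Sum>y\<in>X. w y / y) else w x / x)"
  have quad': "is_quadrature (c # s) (insert 0 X) v"
    unfolding v_def using len X(3) by (intro quadrature_Cons[OF quad X(1)]) auto
  have finX: "finite X" and "0 \<notin> X" "X \<noteq> {}"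
    using is_quadrature_finite[OF quad] X by auto
  have vX: "\<forall>x\<in>X. v x > 0" using w X(1) \<open>0 \<notin> X\<close> by (auto simp: v_def)
  show ?thesis
  proof
    assume boundary: "positive_on_pos_reals (c # s) \<and> \<not> strictly_positive_on_pos_reals (c # s)"
    then obtain a b where "positive_on a b (c # s)" unfolding positive_on_pos_reals_def by blast
    then have "v 0 \<ge> 0"
      by (rule quadrature_weight_nonneg[OF quad' _ _ _ _ _
            poly_node_poly_square_pos[OF finX \<open>0 \<notin> X\<close>]])
        (use finX len X(2) in \<open>simp_all add: poly_node_poly_eq_0_iff degree_node_poly_square\<close>)
    moreover have "\<not> v 0 > 0"
    proof
      assume "v 0 > 0"
      then have "strictly_positive_on_pos_reals (c # s)"
        using vX len X(2) by (intro mass_at_origin_imp_strictly_positive_on_pos_reals[OF quad' X(1)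
              \<open>X \<noteq> {}\<close>]) auto
      then show False using boundary by blast
    qed
    ultimately show "c = (\<Sum>x\<in>X. w x / x)" by (simp add: v_def)
  next
    assume "c = (\<Sum>x\<in>X. w x / x)"
    then have quadX: "is_quadrature (c # s) X v"
      by (intro is_quadrature_remove_zero_weight[OF quad']) (simp add: v_def)
    have "positive_on_pos_reals (c # s)"
      using vX X(1) by (intro quadrature_imp_positive_on_pos_reals[OF quadX]) (auto simp: less_imp_le)
    moreover have "\<not> strictly_positive_on a b (c # s)" for a b
      using len X(2) by (intro not_strictly_positive_on_if_few_nodes[OF quadX]) simp
    ultimately show "positive_on_pos_reals (c # s) \<and> \<not> strictly_positive_on_pos_reals (c # s)"
      unfolding strictly_positive_on_pos_reals_def by blast
  qed
qed

lemma mass_at_origin_nonneg: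
  assumes quad: "is_quadrature u (insert 0 (insert b Y)) v" and Y: "finite Y" "0 \<notin> Y"
    and "0 < b" "positive_on a b u" "2 * card Y + 1 < length u"
  shows "v 0 \<ge> 0"
proof -
  define P where "P = node_poly Y * node_poly Y * [:b, -1:]"
  have "degree P \<le> degree (node_poly Y * node_poly Y) + degree [:b, -1:]"
    unfolding P_def by (rule degree_mult_le)
  then have "degree P < length u" using assms(6) Y(1) by (simp add: degree_node_poly_square)
  moreover have P: "poly P t = poly (node_poly Y * node_poly Y) t * (b - t)" for t
    by (simp add: P_def algebra_simps)
  moreover have "poly (node_poly Y * node_poly Y) t \<ge> 0" for t by simp
  ultimately show ?thesis
    using poly_node_poly_square_pos[OF Y] \<open>0 < b\<close> Y(1)
    by (intro quadrature_weight_nonneg[OF quad assms(5), of 0 P]) (auto simp: poly_node_poly_eq_0_iff)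
qed

lemma positive_Cons_odd_length_imp_strictly_positive:
  assumes len: "length s = 2 * m + 1" and sp: "strictly_positive_on a0 b0 s" "0 < a0" "a0 < b0"
    and pos: "positive_on_pos_reals (c # s)"
  shows "strictly_positive_on_pos_reals (c # s)"
proof -
  obtain a1 b1 where ab1: "positive_on a1 b1 (c # s)"
    using pos unfolding positive_on_pos_reals_def by blast
  define b where "b = max b0 b1"
  obtain Y v where Y: "is_quadrature s (insert b Y) v" "Y \<subseteq> {a0<..<b0}" "b \<notin> Y" "card Y = m"
    "\<forall>x\<in>insert b Y. v x > 0"
    using radau_quadrature[OF len sp(1), of b] by (auto simp: b_def)
  have finY: "finite Y" using is_quadrature_finite[OF Y(1)] by simp
  have "0 < b" using sp(2,3) by (auto simp: b_def)
  have X: "insert b Y \<subseteq> {0<..}" "0 \<notin> Y" using Y(2) sp(2) \<open>0 < b\<close> by auto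
  define v' where "v' = (\<lambda>x. if x = 0 then c - (\<Sum>y\<in>insert b Y. v y / y) else v x / x)"
  have quad: "is_quadrature (c # s) (insert 0 (insert b Y)) v'"
    unfolding v'_def using len by (intro quadrature_Cons[OF Y(1) X(1)]) auto
  have vX: "\<forall>x\<in>insert b Y. v' x > 0" using Y(5) X by (auto simp: v'_def)
  have "positive_on (min a0 a1) b (c # s)"
    using ab1 by (rule positive_on_mono) (auto simp: b_def)
  then have "v' 0 \<ge> 0"
    using len Y(4) by (intro mass_at_origin_nonneg[OF quad finY X(2) \<open>0 < b\<close>]) auto
  then consider "v' 0 = 0" | "v' 0 > 0" by linarith
  then show ?thesis
  proof cases
    case 1
    then have "is_quadrature (c # s) (insert b Y) v'"
      by (rule is_quadrature_remove_zero_weight[OF quad])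
    then show ?thesis
      using vX X(1) len Y(3,4) finY by (intro quadrature_imp_strictly_positive_on_pos_reals) auto
  next
    case 2
    then show ?thesis
      using vX len Y(3,4) finY
      by (intro mass_at_origin_imp_strictly_positive_on_pos_reals[OF quad X(1)]) auto
  qed
qed

definition discrete_measure :: "real set \<Rightarrow> (real \<Rightarrow> real) \<Rightarrow> real measure" where
  "discrete_measure X w = distr (point_measure X (\<lambda>x. ennreal (w x))) borel (\<lambda>x. x)"

lemma sets_discrete_measure [simp]: "sets (discrete_measure X w) = sets borel"
  by (simp add: discrete_measure_def)

lemma space_discrete_measure [simp]: "space (discrete_measure X w) = UNIV"
  by (simp add: discrete_measure_def)

lemma emeasure_discrete_measure:
  assumes "finite X" "A \<in> sets borel"
  shows "emeasure (discrete_measure X w) A = (\<Sum>x\<in>A \<inter> X. ennreal (w x))"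
  using assms
  by (simp add: discrete_measure_def emeasure_distr space_point_measure emeasure_point_measure_finite)

lemma finite_measure_discrete_measure: "finite X \<Longrightarrow> finite_measure (discrete_measure X w)"
  by (rule finite_measureI) (simp add: emeasure_discrete_measure)

lemma integral_discrete_measure:
  fixes f :: "real \<Rightarrow> real"
  assumes "finite X" "\<forall>x\<in>X. w x \<ge> 0" "f \<in> borel_measurable borel"
  shows "integrable (discrete_measure X w) f" "(\<integral>x. f x \<partial>discrete_measure X w) = (\<Sum>x\<in>X. w x * f x)"
proof -
  have meas: "(\<lambda>x. x) \<in> measurable (point_measure X (\<lambda>x. ennreal (w x))) borel" by simp
  show "integrable (discrete_measure X w) f"
    unfolding discrete_measure_def
    by (subst integrable_distr_eq[OF meas assms(3)])
      (rule integrable_point_measure_finite[OF assms(1)])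
  have "(\<integral>x. f x \<partial>discrete_measure X w) = (\<integral>x. f x \<partial>point_measure X (\<lambda>x. ennreal (w x)))"
    unfolding discrete_measure_def by (rule integral_distr[OF meas assms(3)])
  also have "\<dots> = (\<Sum>x\<in>X. w x * f x)"
    using assms by (simp add: lebesgue_integral_point_measure_finite)
  finally show "(\<integral>x. f x \<partial>discrete_measure X w) = (\<Sum>x\<in>X. w x * f x)" .
qed

lemma atoms_discrete_measure:
  assumes "finite X" "\<forall>x\<in>X. w x > 0"
  shows "atoms (discrete_measure X w) = X" "emeasure (discrete_measure X w) (UNIV - X) = 0"
proof -
  have "emeasure (discrete_measure X w) {x} = (if x \<in> X then ennreal (w x) else 0)" for x
    using assms(1) by (simp add: emeasure_discrete_measure Int_insert_left)
  then show "atoms (discrete_measure X w) = X" using assms(2) by (auto simp: atoms_def)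
  show "emeasure (discrete_measure X w) (UNIV - X) = 0"
    using assms(1) by (simp add: emeasure_discrete_measure finite_imp_closed Diff_Int_distrib2)
qed

lemma discrete_measure_in_moment_measures:
  assumes "is_quadrature u X w" "X \<subseteq> {a..b}" "\<forall>x\<in>X. w x \<ge> 0"
  shows "discrete_measure X w \<in> moment_measures a b u"
proof -
  have fin: "finite X" using assms(1) by (rule is_quadrature_finite)
  have "(UNIV - {a..b}) \<inter> X = {}" using assms(2) by blast
  then have "emeasure (discrete_measure X w) (UNIV - {a..b}) = 0"
    using fin by (simp add: emeasure_discrete_measure)
  moreover have "integrable (discrete_measure X w) (\<lambda>x. x ^ j) \<and>
      (\<integral>x. x ^ j \<partial>discrete_measure X w) = u ! j"
    if "j < length u" for j
    using integral_discrete_measure[OF fin assms(3), of "\<lambda>x. x ^ j"]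
      is_quadratureD[OF assms(1), of "monom 1 j"] that
    by (simp add: degree_monom_eq poly_monom seq_functional_monom)
  ultimately show ?thesis
    using finite_measure_discrete_measure[OF fin] by (simp add: moment_measures_def)
qed

lemma moment_measures_basic:
  assumes "M \<in> moment_measures a b u"
  shows "sets M = sets borel" "finite_measure M" "space M = UNIV" "AE x in M. x \<in> {a..b}"
proof -
  show s: "sets M = sets borel" "finite_measure M" using assms by (auto simp: moment_measures_def)
  show sp: "space M = UNIV" using sets_eq_imp_space_eq[OF s(1)] by simp
  have "UNIV - {a..b} \<in> null_sets M"
    using assms s(1) by (intro null_setsI) (auto simp: moment_measures_def)
  then show "AE x in M. x \<in> {a..b}" by (rule AE_I') (auto simp: sp)
qed

lemma moment_measures_integral_poly:
  assumes "M \<in> moment_measures a b u" "degree P < length u"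
  shows "integrable M (poly P)" "(\<integral>x. poly P x \<partial>M) = seq_functional u P"
proof -
  have mom: "integrable M (\<lambda>x. x ^ j) \<and> (\<integral>x. x ^ j \<partial>M) = u ! j" if "j < length u" for j
    using assms(1) that by (auto simp: moment_measures_def)
  have P: "poly P = (\<lambda>x. \<Sum>i\<le>degree P. coeff P i * x ^ i)" by (simp add: poly_altdef fun_eq_iff)
  have int: "integrable M (\<lambda>x. coeff P i * x ^ i)" if "i \<le> degree P" for i
    using mom[of i] that assms(2) by auto
  show "integrable M (poly P)" unfolding P by (intro Bochner_Integration.integrable_sum int) simp
  have "(\<integral>x. poly P x \<partial>M) = (\<Sum>i\<le>degree P. coeff P i * u ! i)"
    unfolding P using int mom assms(2) by (subst Bochner_Integration.integral_sum) auto
  also have "\<dots> = seq_functional u P"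
    unfolding seq_functional_def using assms(2)
    by (intro sum.mono_neutral_left) (auto simp: coeff_eq_0)
  finally show "(\<integral>x. poly P x \<partial>M) = seq_functional u P" .
qed

lemma moment_measures_integrable_inverse:
  assumes "M \<in> moment_measures a b u" "0 < a"
  shows "integrable M (\<lambda>t. 1 / t)"
proof -
  note Mb = moment_measures_basic[OF assms(1)]
  interpret finite_measure M by (rule Mb(2))
  show ?thesis
  proof (rule integrable_const_bound[where B = "1 / a"])
    show "AE t in M. norm (1 / t) \<le> 1 / a"
      using Mb(4) by eventually_elim (use assms(2) in \<open>auto simp: field_simps\<close>)
    show "(\<lambda>t. 1 / t) \<in> borel_measurable M"
      unfolding measurable_cong_sets[OF Mb(1) refl] by measurable
  qed
qed

text \<open>With \<open>q\<close> the node polynomial, \<open>q(t)\<^sup>2 / t = q(0)\<^sup>2 / t + R(t)\<close> for a polynomial \<open>R\<close> of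
  degree below \<open>2 card X\<close>, and the quadrature integrates \<open>R\<close> exactly.\<close>

lemma integral_inverse_ge_quadrature:
  assumes quad: "is_quadrature s X w" and X: "X \<subseteq> {0<..}" "2 * card X \<le> length s" "s \<noteq> []"
    and M: "M \<in> moment_measures a b s" "0 < a"
  shows "(\<Sum>x\<in>X. w x / x) \<le> (\<integral>t. 1 / t \<partial>M)"
proof -
  have finX: "finite X" using quad by (rule is_quadrature_finite)
  define q where "q = node_poly X"
  obtain c0 R where qq: "q * q = pCons c0 R" by (cases "q * q") auto
  have "c0 > 0"
    using poly_node_poly_square_pos[OF finX, of 0] X(1) arg_cong[OF qq, of "\<lambda>p. poly p 0"]
    by (auto simp: q_def)
  have degR: "degree R < length s"
    using degree_node_poly_square[OF finX] X(2,3) qq by (cases "R = 0") (auto simp: q_def)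
  have R_nodes: "poly R x = - c0 / x" if "x \<in> X" for x
  proof -
    have "poly (q * q) x = 0" using that finX by (simp add: q_def poly_node_poly_eq_0_iff)
    then show ?thesis using that X(1) qq by (auto simp: field_simps)
  qed
  note int_R = moment_measures_integral_poly[OF M(1) degR]
  have "0 \<le> (\<integral>t. c0 * (1 / t) + poly R t \<partial>M)"
  proof (rule integral_nonneg_AE)
    show "AE t in M. 0 \<le> c0 * (1 / t) + poly R t"
      using moment_measures_basic(4)[OF M(1)]
    proof eventually_elim
      case (elim t)
      then have "t > 0" using M(2) by simp
      then have "c0 * (1 / t) + poly R t = poly q t * poly q t / t"
        using arg_cong[OF qq, of "\<lambda>p. poly p t"] by (simp add: field_simps)
      then show ?case using \<open>t > 0\<close> by simp
    qed
  qed
  also have "\<dots> = (\<integral>t. c0 * (1 / t) \<partial>M) + (\<integral>t. poly R t \<partial>M)"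
    by (rule Bochner_Integration.integral_add[OF integrable_mult_right int_R(1)])
      (rule moment_measures_integrable_inverse[OF M])
  also have "\<dots> = c0 * (\<integral>t. 1 / t \<partial>M) + seq_functional s R"
    by (simp only: integral_mult_right_zero int_R(2))
  also have "seq_functional s R = - c0 * (\<Sum>x\<in>X. w x / x)"
    using is_quadratureD[OF quad degR] R_nodes by (simp add: sum_distrib_left mult.commute)
  finally have "0 \<le> c0 * ((\<integral>t. 1 / t \<partial>M) - (\<Sum>x\<in>X. w x / x))"
    by (simp add: right_diff_distrib)
  then show ?thesis using \<open>c0 > 0\<close> by (simp add: zero_le_mult_iff)
qed

lemma t_infty_eq_quadrature:
  assumes quad: "is_quadrature s X w" and X: "X \<subseteq> {a..b}" "0 < a" "a < b"
    and "\<forall>x\<in>X. w x \<ge> 0" "2 * card X \<le> length s" "s \<noteq> []"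
  shows "t_infty s = ereal (\<Sum>x\<in>X. w x / x)"
proof (rule antisym)
  have "X \<subseteq> {0<..}" using X by auto
  then have "ereal (\<Sum>x\<in>X. w x / x) \<le> t_ab a' b' s" if "0 < a'" for a' b'
    unfolding t_ab_def using integral_inverse_ge_quadrature[OF quad _ assms(6,7) _ that]
    by (auto intro!: Inf_greatest)
  then show "ereal (\<Sum>x\<in>X. w x / x) \<le> t_infty s"
    unfolding t_infty_def by (auto intro!: INF_greatest)
  have "(\<integral>t. 1 / t \<partial>discrete_measure X w) = (\<Sum>x\<in>X. w x / x)"
    using integral_discrete_measure(2)[OF is_quadrature_finite[OF quad] assms(5), of "\<lambda>t. 1 / t"]
    by simp
  then have "t_ab a b s \<le> ereal (\<Sum>x\<in>X. w x / x)"
    unfolding t_ab_def using discrete_measure_in_moment_measures[OF quad X(1) assms(5)]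
    by (metis (mono_tags, lifting) Inf_lower image_eqI)
  then show "t_infty s \<le> ereal (\<Sum>x\<in>X. w x / x)"
    unfolding t_infty_def using X(2,3) by (intro INF_lower2[of a] INF_lower2[of b]) auto
qed

lemma AE_in_nodes:
  assumes M: "M \<in> moment_measures a b u" and quad: "is_quadrature u X w" "2 * card X < length u"
  shows "AE x in M. x \<in> X"
proof -
  have finX: "finite X" using quad(1) by (rule is_quadrature_finite)
  define P where "P = node_poly X * node_poly X"
  have degP: "degree P < length u" using quad(2) finX by (simp add: P_def degree_node_poly_square)
  note int = moment_measures_integral_poly[OF M degP]
  have "\<forall>x\<in>X. poly (node_poly X) x = 0" using poly_node_poly_eq_0_iff[OF finX] by simp
  then have "seq_functional u P = 0" using is_quadratureD[OF quad(1) degP] by (simp add: P_def)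
  then have "(\<integral>x. poly P x \<partial>M) = 0" using int(2) by simp
  moreover have "AE x in M. 0 \<le> poly P x" by (simp add: P_def)
  ultimately have "AE x in M. poly P x = 0" using integral_nonneg_eq_0_iff_AE[OF int(1)] by simp
  then show ?thesis by eventually_elim (simp add: P_def poly_node_poly_eq_0_iff[OF finX])
qed

lemma integral_finite_support:
  fixes f :: "real \<Rightarrow> real"
  assumes "finite_measure M" "sets M = sets borel" "finite X" "AE x in M. x \<in> X"
    and "f \<in> borel_measurable borel"
  shows "(\<integral>t. f t \<partial>M) = (\<Sum>x\<in>X. f x * measure M {x})"
proof -
  interpret finite_measure M by (rule assms(1))
  have space: "space M = UNIV" using sets_eq_imp_space_eq[OF assms(2)] by simp
  have int: "integrable M (\<lambda>t. f x * indicator {x} t)" for x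
    using assms(2)
    by (intro integrable_mult_right integrable_real_indicator) (auto simp: less_top[symmetric])
  have "(\<integral>t. f t \<partial>M) = (\<integral>t. (\<Sum>x\<in>X. f x * indicator {x} t) \<partial>M)"
  proof (rule integral_cong_AE)
    show "f \<in> borel_measurable M"
      unfolding measurable_cong_sets[OF assms(2) refl] by (rule assms(5))
    show "(\<lambda>t. \<Sum>x\<in>X. f x * indicator {x} t) \<in> borel_measurable M"
      using int by (intro borel_measurable_integrable Bochner_Integration.integrable_sum)
    show "AE t in M. f t = (\<Sum>x\<in>X. f x * indicator {x} t)"
      using assms(4) by eventually_elim (use assms(3) in \<open>simp add: indicator_def\<close>)
  qed
  also have "\<dots> = (\<Sum>x\<in>X. f x * measure M {x})"
    using int by (simp add: Bochner_Integration.integral_sum space)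
  finally show ?thesis .
qed

lemma measure_eq_discrete_measure:
  assumes "finite_measure M" "sets M = sets borel" "finite X" "AE x in M. x \<in> X"
    and "\<forall>x\<in>X. measure M {x} = w x"
  shows "M = discrete_measure X w"
proof (rule measure_eqI)
  interpret finite_measure M by (rule assms(1))
  show "sets M = sets (discrete_measure X w)" using assms(2) by simp
  fix A assume "A \<in> sets M"
  then have A: "A \<in> sets borel" using assms(2) by simp
  have "emeasure M A = emeasure M (A \<inter> X)"
    using assms(2-4) A by (intro emeasure_eq_AE) (auto simp: finite_imp_closed)
  also have "\<dots> = (\<Sum>x\<in>A \<inter> X. emeasure M {x})"
    using assms(2,3) by (intro emeasure_eq_sum_singleton) auto
  also have "\<dots> = (\<Sum>x\<in>A \<inter> X. ennreal (w x))"
    using assms(5) by (intro sum.cong) (auto simp: emeasure_eq_measure)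
  also have "\<dots> = emeasure (discrete_measure X w) A"
    using assms(3) A by (simp add: emeasure_discrete_measure)
  finally show "emeasure M A = emeasure (discrete_measure X w) A" .
qed

text \<open>A quadrature with fewer than half as many nodes as moments determines the measure: it
  must live on the nodes, and the Lagrange basis polynomials read off the point masses.\<close>

lemma moment_measure_eq_discrete_measure:
  assumes M: "M \<in> moment_measures a b u" and quad: "is_quadrature u X w" "2 * card X < length u"
  shows "M = discrete_measure X w"
proof -
  have finX: "finite X" using quad(1) by (rule is_quadrature_finite)
  note Mb = moment_measures_basic[OF M]
  have AE: "AE x in M. x \<in> X" by (rule AE_in_nodes[OF M quad])
  have "measure M {x} = w x" if "x \<in> X" for x
  proof -
    have deg: "degree (lagrange_basis X x) < length u"
      using degree_lagrange_basis[OF finX that] quad(2) by simp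
    have "(\<integral>t. poly (lagrange_basis X x) t \<partial>M) = (\<Sum>y\<in>X. poly (lagrange_basis X x) y * measure M {y})"
      by (intro integral_finite_support[OF Mb(2,1) finX AE] borel_measurable_continuous_onI)
        (auto intro: continuous_intros)
    also have "\<dots> = (\<Sum>y\<in>X. if y = x then measure M {y} else 0)"
      using finX that by (intro sum.cong) (auto simp: poly_lagrange_basis)
    finally have "measure M {x} = (\<integral>t. poly (lagrange_basis X x) t \<partial>M)"
      using finX that by simp
    also have "\<dots> = w x"
      using moment_measures_integral_poly(2)[OF M deg] quadrature_weight_eq[OF quad(1) that] quad(2)
      by simp
    finally show ?thesis .
  qed
  then show ?thesis using measure_eq_discrete_measure[OF Mb(2,1) finX AE] by blast
qed

lemma moment_measures_pos_reals_Cons: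
  assumes quad: "is_quadrature s X w" and X: "X \<subseteq> {a..b}" "0 < a" "a < b"
    and w: "\<forall>x\<in>X. w x > 0" and len: "2 * card X \<le> length s" "s \<noteq> []"
  shows "moment_measures_pos_reals ((\<Sum>x\<in>X. w x / x) # s) = {discrete_measure X (\<lambda>x. w x / x)}"
proof -
  have "X \<subseteq> {0<..}" using X by auto
  then have "is_quadrature ((\<Sum>x\<in>X. w x / x) # s) X
      (\<lambda>x. if x = 0 then (\<Sum>x\<in>X. w x / x) - (\<Sum>y\<in>X. w y / y) else w x / x)"
    by (intro is_quadrature_remove_zero_weight[OF quadrature_Cons[OF quad _ len(2)]]) auto
  then have quad': "is_quadrature ((\<Sum>x\<in>X. w x / x) # s) X (\<lambda>x. w x / x)"
    by (rule is_quadrature_cong) simp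
  have "discrete_measure X (\<lambda>x. w x / x) \<in> moment_measures a b ((\<Sum>x\<in>X. w x / x) # s)"
    using \<open>X \<subseteq> {0<..}\<close> w
    by (intro discrete_measure_in_moment_measures[OF quad' X(1)]) (force simp: zero_le_divide_iff)
  moreover have "M = discrete_measure X (\<lambda>x. w x / x)"
    if "M \<in> moment_measures a' b' ((\<Sum>x\<in>X. w x / x) # s)" for a' b' M
    using len(1) by (intro moment_measure_eq_discrete_measure[OF that quad']) simp
  ultimately show ?thesis
    using X(2,3) unfolding moment_measures_pos_reals_def by blast
qed

lemma Cons_on_boundary_even_length:
  assumes len: "length s = 2 * m" "m \<ge> 1" and sp: "strictly_positive_on a b s" "0 < a" "a < b"
  shows "positive_on_pos_reals (c # s) \<and> \<not> strictly_positive_on_pos_reals (c # s)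
           \<longleftrightarrow> ereal c = t_infty s"
    and "positive_on_pos_reals (c # s) \<and> \<not> strictly_positive_on_pos_reals (c # s) \<Longrightarrow>
           (\<exists>!M. M \<in> moment_measures_pos_reals (c # s)) \<and>
           (\<forall>M\<in>moment_measures_pos_reals (c # s).
              atoms M = {t. Q_det s m t = 0} \<and> emeasure M (UNIV - atoms M) = 0)"
proof -
  obtain X w where X: "is_quadrature s X w" "X = {t. poly (Q_poly s m) t = 0}" "X \<subseteq> {a<..<b}"
    "card X = m" "\<forall>x\<in>X. w x > 0"
    using gauss_quadrature[OF sp(1) len(1)] by blast
  have "X \<subseteq> {0<..}" "X \<subseteq> {a..b}" "s \<noteq> []" using X(3) sp(2) len by auto
  note boundary_iff = Cons_on_boundary_iff[OF X(1) \<open>X \<subseteq> {0<..}\<close> X(4) len(2,1) X(5)]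
  have "t_infty s = ereal (\<Sum>x\<in>X. w x / x)"
    using X(4,5) len by (intro t_infty_eq_quadrature[OF X(1) \<open>X \<subseteq> {a..b}\<close> sp(2,3)]) auto
  then show "positive_on_pos_reals (c # s) \<and> \<not> strictly_positive_on_pos_reals (c # s)
      \<longleftrightarrow> ereal c = t_infty s"
    using boundary_iff by simp
  assume "positive_on_pos_reals (c # s) \<and> \<not> strictly_positive_on_pos_reals (c # s)"
  then have "moment_measures_pos_reals (c # s) = {discrete_measure X (\<lambda>x. w x / x)}"
    using boundary_iff X(4,5) len \<open>s \<noteq> []\<close>
    by (simp add: moment_measures_pos_reals_Cons[OF X(1) \<open>X \<subseteq> {a..b}\<close> sp(2,3)])
  moreover have "\<forall>x\<in>X. w x / x > 0" using X(5) \<open>X \<subseteq> {0<..}\<close> by auto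
  ultimately show "(\<exists>!M. M \<in> moment_measures_pos_reals (c # s)) \<and>
      (\<forall>M\<in>moment_measures_pos_reals (c # s).
         atoms M = {t. Q_det s m t = 0} \<and> emeasure M (UNIV - atoms M) = 0)"
    using atoms_discrete_measure[OF is_quadrature_finite[OF X(1)]] X(2)
    by (simp add: Q_det_eq_poly_Q_poly)
qed

theorem corollary5p5:
  fixes n :: nat and s :: "real list" and s_m1 :: real
  assumes "length s = n + 1"
    and "\<forall>x\<in>set s. x \<ge> 0"
    and "strictly_positive_on_pos_reals s"
    and "s_m1 \<ge> 0"
  shows "((positive_on_pos_reals (s_m1 # s) \<and> \<not> strictly_positive_on_pos_reals (s_m1 # s))
           \<longleftrightarrow> (odd n \<and> ereal s_m1 = t_infty s)) \<and>
         (\<forall>m. positive_on_pos_reals (s_m1 # s) \<and> \<not> strictly_positive_on_pos_reals (s_m1 # s)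
           \<and> n + 1 = 2 * m \<longrightarrow>
           (\<exists>!M. M \<in> moment_measures_pos_reals (s_m1 # s)) \<and>
           (\<forall>M\<in>moment_measures_pos_reals (s_m1 # s).
               atoms M = {t. Q_det s m t = 0} \<and> emeasure M (UNIV - atoms M) = 0))"
proof -
  let ?I = "positive_on_pos_reals (s_m1 # s) \<and> \<not> strictly_positive_on_pos_reals (s_m1 # s)"
  obtain a b where ab: "strictly_positive_on a b s" "0 < a" "a < b"
    using assms(3) unfolding strictly_positive_on_pos_reals_def by blast
  have odd: "length s = 2 * m" "m \<ge> 1" if "n + 1 = 2 * m" for m
    using that assms(1) by auto
  have "?I \<longleftrightarrow> odd n \<and> ereal s_m1 = t_infty s"
  proof (cases "odd n")
    case True
    then obtain k where "n = 2 * k + 1" by (rule oddE)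
    then have "n + 1 = 2 * (k + 1)" by simp
    with True show ?thesis using Cons_on_boundary_even_length(1)[OF odd ab] by blast
  next
    case False
    then obtain k where "length s = 2 * k + 1" using assms(1) by (auto elim!: evenE)
    then show ?thesis using positive_Cons_odd_length_imp_strictly_positive[OF _ ab] False by blast
  qed
  then show ?thesis using Cons_on_boundary_even_length(2)[OF odd ab] by blast
qed

end
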